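(* Let $R$ be a left localizable ring such that $\max\mathrm{Den}_l(R)=\{S_1,\ldots,S_n\}$ (with the $S_i$ distinct), and let $\mathfrak{a}_j:=\mathrm{ass}(S_j)$. (1) If $n=1$ then $S_{1,c}=S_1=R\setminus\{0\}$. (2) If $n\geq 2$ then $S_{i,c}=S_i\cap\bigcap_{j\neq i}\mathfrak{a}_j$ for each $i=1,\ldots,n$.
   Context: All rings are associative with $1$. A multiplicative subset $S$ of $R$ ($1\in S$, $0\notin S$, closed under multiplication) is a left Ore set if $Sr\cap Rs\neq\emptyset$ for all $r\in R$, $s\in S$; for it, $\mathrm{ass}(S):=\{r\in R: sr=0\text{ for some } s\in S\}$. A left Ore set $S$ is a left denominator set if $rs=0$ ($r\in R$, $s\in S$) implies $tr=0$ for some $t\in S$. $\max\mathrm{Den}_l(R)$ is the set of maximal elements, under inclusion, of the set of left denominator sets of $R$. A ring $R$ is left localizable if every nonzero $r\in R$ lies in some left denominator set. For $s\in R$, $\ker(s\cdot):=\{r\in R: sr=0\}$; the core of a left Ore set $S$ is $S_c:=\{s\in S:\ker(s\cdot)=\mathrm{ass}(S)\}$, and $S_{i,c}$ denotes the core of $S_i$. *)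

theory Defs
  imports Main
begin

text \<open>The ring R is the whole carrier of a type of class ring_1
  (associative, with 1; not necessarily commutative).\<close>

definition mult_subset :: "'a::ring_1 set \<Rightarrow> bool" where
  "mult_subset S \<longleftrightarrow> 1 \<in> S \<and> 0 \<notin> S \<and> (\<forall>a\<in>S. \<forall>b\<in>S. a * b \<in> S)"

definition left_Ore :: "'a::ring_1 set \<Rightarrow> bool" where
  "left_Ore S \<longleftrightarrow> mult_subset S \<and>
     (\<forall>r. \<forall>s\<in>S. \<exists>s'\<in>S. \<exists>r'. s' * r = r' * s)"

definition ass :: "'a::ring_1 set \<Rightarrow> 'a set" where
  "ass S = {r. \<exists>s\<in>S. s * r = 0}"

definition left_den :: "'a::ring_1 set \<Rightarrow> bool" where
  "left_den S \<longleftrightarrow> left_Ore S \<and>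
     (\<forall>r. \<forall>s\<in>S. r * s = 0 \<longrightarrow> (\<exists>t\<in>S. t * r = 0))"

definition maxDen_l :: "'a::ring_1 set set" where
  "maxDen_l = {S. left_den S \<and> (\<forall>T. left_den T \<longrightarrow> S \<subseteq> T \<longrightarrow> T = S)}"

definition left_localizable :: "'a::ring_1 itself \<Rightarrow> bool" where
  "left_localizable _ \<longleftrightarrow> (\<forall>r::'a. r \<noteq> 0 \<longrightarrow> (\<exists>S. left_den S \<and> r \<in> S))"

definition kerl :: "'a::ring_1 \<Rightarrow> 'a set" where
  "kerl s = {r. s * r = 0}"

definition core :: "'a::ring_1 set \<Rightarrow> 'a set" where
  "core S = {s \<in> S. kerl s = ass S}"

end

theory Submission
  imports Defs
begin

text \<open>A left localizable ring is reduced (a nonzero x lies in a denominator set, which then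
  contains x * x \<noteq> 0). In a reduced ring zero products do not depend on the order of their factors,
  so if two distinct maximal left denominator sets S and T had S \<inter> ass T = {}, the monoid
  generated by S \<union> T would be a left denominator set (a product of elements of S \<union> T kills
  something only if some s t does, and s t = 0 forces s \<in> ass T), contradicting maximality.
  Hence S \<inter> ass T \<noteq> {} for all distinct maximal S, T. Given s in the core of S and t \<in> T \<inter> ass S
  we get s t = 0, so s \<in> ass T. Conversely, if s \<in> S lies in ass T for every other maximal T and
  r \<in> ass S with s r \<noteq> 0, then s r lies in some maximal K (localizability and Zorn), and in
  both cases K = S and K \<noteq> S it also lies in ass K, which is disjoint from K.\<close>

lemma left_den_mult_subset: "left_den S \<Longrightarrow> mult_subset S"
  by (simp add: left_den_def left_Ore_def)

lemma left_den_zero_notin: "left_den S \<Longrightarrow> 0 \<notin> S"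
  by (simp add: left_den_def left_Ore_def mult_subset_def)

lemma left_den_mult_closed: "left_den S \<Longrightarrow> a \<in> S \<Longrightarrow> b \<in> S \<Longrightarrow> a * b \<in> S"
  by (simp add: left_den_def left_Ore_def mult_subset_def)

lemma left_den_OreD: "left_den S \<Longrightarrow> s \<in> S \<Longrightarrow> \<exists>s'\<in>S. \<exists>r'. s' * r = r' * s"
  unfolding left_den_def left_Ore_def by blast

lemma left_den_annD: "left_den S \<Longrightarrow> s \<in> S \<Longrightarrow> r * s = 0 \<Longrightarrow> \<exists>t\<in>S. t * r = 0"
  unfolding left_den_def by blast

lemma kerl_subset_ass: "s \<in> S \<Longrightarrow> kerl s \<subseteq> ass S"
  by (auto simp: kerl_def ass_def)

lemma left_den_Int_ass:
  assumes "left_den S"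
  shows "S \<inter> ass S = {}"
proof -
  have "s * r \<noteq> 0" if "r \<in> S" "s \<in> S" for r s
    using left_den_mult_closed[OF assms that(2,1)] left_den_zero_notin[OF assms] by auto
  then show ?thesis
    by (auto simp: ass_def)
qed

lemma ass_mult_left:
  assumes "left_den S" "s \<in> S" "r \<in> ass S"
  shows "s * r \<in> ass S"
proof -
  obtain t where t: "t \<in> S" "t * r = 0"
    using assms(3) by (auto simp: ass_def)
  obtain t' r' where "t' \<in> S" "t' * s = r' * t"
    using left_den_OreD[OF assms(1) t(1)] by blast
  then have "t' * (s * r) = 0"
    by (metis mult.assoc t(2) mult_zero_right)
  with \<open>t' \<in> S\<close> show ?thesis
    by (auto simp: ass_def)
qed

lemma ass_mult_right: "r \<in> ass S \<Longrightarrow> r * x \<in> ass S"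
  by (auto simp: ass_def) (metis mult.assoc mult_zero_left)


subsection \<open>Existence of maximal left denominator sets\<close>

lemma left_den_Union_chain:
  assumes "C \<noteq> {}" and den: "\<And>X. X \<in> C \<Longrightarrow> left_den X"
    and chain: "\<And>X Y. X \<in> C \<Longrightarrow> Y \<in> C \<Longrightarrow> X \<subseteq> Y \<or> Y \<subseteq> X"
  shows "left_den (\<Union>C)"
  unfolding left_den_def left_Ore_def mult_subset_def
proof (intro conjI ballI allI impI)
  show "1 \<in> \<Union>C"
    using \<open>C \<noteq> {}\<close> den by (auto simp: left_den_def left_Ore_def mult_subset_def)
  show "0 \<notin> \<Union>C"
    using den left_den_zero_notin by blast
  show "a * b \<in> \<Union>C" if ab: "a \<in> \<Union>C" "b \<in> \<Union>C" for a b
  proof -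
    obtain A B where AB: "A \<in> C" "B \<in> C" "a \<in> A" "b \<in> B"
      using ab by blast
    from chain[OF AB(1,2)] have "a \<in> B \<and> b \<in> B \<or> a \<in> A \<and> b \<in> A"
      using AB(3,4) by blast
    then show ?thesis
      using AB(1,2) den left_den_mult_closed by blast
  qed
  show "\<exists>s'\<in>\<Union>C. \<exists>r'. s' * r = r' * s" if "s \<in> \<Union>C" for r s
    using that den left_den_OreD by (meson UnionE UnionI)
  show "\<exists>t\<in>\<Union>C. t * r = 0" if "s \<in> \<Union>C" "r * s = 0" for r s
    using that den left_den_annD by (meson UnionE UnionI)
qed

lemma left_den_subset_maxDen_l:
  assumes "left_den T"
  shows "\<exists>M\<in>maxDen_l. T \<subseteq> M"
proof -
  have "\<exists>M\<in>{S. left_den S \<and> T \<subseteq> S}. \<forall>X\<in>{S. left_den S \<and> T \<subseteq> S}. M \<subseteq> X \<longrightarrow> X = M"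
  proof (rule subset_Zorn_nonempty)
    show "{S. left_den S \<and> T \<subseteq> S} \<noteq> {}"
      using assms by blast
    show "\<Union>C \<in> {S. left_den S \<and> T \<subseteq> S}"
      if "C \<noteq> {}" "subset.chain {S. left_den S \<and> T \<subseteq> S} C" for C
    proof -
      have C: "C \<subseteq> {S. left_den S \<and> T \<subseteq> S}" "\<forall>X\<in>C. \<forall>Y\<in>C. X \<subseteq> Y \<or> Y \<subseteq> X"
        using that(2) by (simp_all add: subset_chain_def)
      have "left_den (\<Union>C)"
        using that(1) by (rule left_den_Union_chain) (use C in blast)+
      moreover have "T \<subseteq> \<Union>C"
        using that(1) C(1) by blast
      ultimately show ?thesis
        by blast
    qed
  qed
  then obtain M where M: "left_den M" "T \<subseteq> M"
    and max: "\<forall>X\<in>{S. left_den S \<and> T \<subseteq> S}. M \<subseteq> X \<longrightarrow> X = M"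
    by blast
  have "M \<in> maxDen_l"
    unfolding maxDen_l_def
  proof (intro CollectI conjI allI impI)
    show "X = M" if "left_den X" "M \<subseteq> X" for X
      using max that M(2) by blast
  qed (rule M(1))
  with M(2) show ?thesis
    by blast
qed

lemma left_localizable_reduced:
  assumes "left_localizable TYPE('a::ring_1)" "(x::'a) * x = 0"
  shows "x = 0"
proof (rule ccontr)
  assume "x \<noteq> 0"
  then obtain T where "left_den T" "x \<in> T"
    using assms(1) unfolding left_localizable_def by blast
  then show False
    using assms(2) left_den_mult_closed left_den_zero_notin by metis
qed

lemma left_localizable_maxDen_l_cover:
  assumes "left_localizable TYPE('a::ring_1)" "(r::'a) \<noteq> 0"
  shows "\<exists>M\<in>maxDen_l. r \<in> M"
  using assms left_den_subset_maxDen_l unfolding left_localizable_def by blast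


inductive_set monoid_gen :: "'a::monoid_mult set \<Rightarrow> 'a set" for X where
  one: "1 \<in> monoid_gen X"
| snoc: "x \<in> monoid_gen X \<Longrightarrow> y \<in> X \<Longrightarrow> x * y \<in> monoid_gen X"

lemma monoid_gen_mult: "y \<in> monoid_gen X \<Longrightarrow> x \<in> monoid_gen X \<Longrightarrow> x * y \<in> monoid_gen X"
proof (induction y rule: monoid_gen.induct)
  case one
  then show ?case by simp
next
  case (snoc z y)
  then have "(x * z) * y \<in> monoid_gen X"
    by (simp add: monoid_gen.snoc)
  then show ?case
    by (simp add: mult.assoc)
qed

lemma monoid_gen_base: "y \<in> X \<Longrightarrow> y \<in> monoid_gen X"
  using monoid_gen.snoc[OF monoid_gen.one] by fastforce

lemma monoid_gen_Ore:
  assumes Ore: "\<And>y r. y \<in> X \<Longrightarrow> \<exists>m\<in>monoid_gen X. \<exists>r'. m * r = r' * y"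
  shows "x \<in> monoid_gen X \<Longrightarrow> \<exists>m\<in>monoid_gen X. \<exists>r'. m * r = r' * x"
proof (induction x arbitrary: r rule: monoid_gen.induct)
  case one
  then show ?case
    using monoid_gen.one by force
next
  case (snoc x y)
  obtain m1 r1 where m1: "m1 \<in> monoid_gen X" "m1 * r = r1 * y"
    using Ore[OF snoc(2)] by blast
  obtain m2 r2 where m2: "m2 \<in> monoid_gen X" "m2 * r1 = r2 * x"
    using snoc(3) by blast
  have "(m2 * m1) * r = r2 * (x * y)"
    by (metis m1(2) m2(2) mult.assoc)
  moreover have "m2 * m1 \<in> monoid_gen X"
    using monoid_gen_mult m1(1) m2(1) by blast
  ultimately show ?case by blast
qed


subsection \<open>Reduced rings\<close>

context
  assumes reduced: "\<And>x::'a::ring_1. x * x = 0 \<Longrightarrow> x = 0"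
begin

lemma zero_product_commute: "(a::'a) * b = 0 \<Longrightarrow> b * a = 0"
proof -
  assume "a * b = 0"
  then have "(b * a) * (b * a) = 0"
    by (metis mult.assoc mult_zero_left mult_zero_right)
  then show ?thesis by (rule reduced)
qed

lemma zero_product_insert: "(u::'a) * v = 0 \<Longrightarrow> u * r * v = 0"
proof -
  assume "u * v = 0"
  then have "v * u = 0" by (rule zero_product_commute)
  then have "(u * r * v) * (u * r * v) = 0"
    by (metis mult.assoc mult_zero_left mult_zero_right)
  then show ?thesis by (rule reduced)
qed

lemma zero_product_swap: "(a::'a) * t * y * b = 0 \<Longrightarrow> a * y * t * b = 0"
proof -
  assume "a * t * y * b = 0"
  then have "a * (t * y * b) = 0"
    by (simp add: mult.assoc)
  then have "(a * y * t) * (y * b) = 0"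
    using zero_product_insert[of a "t * y * b" y] by (simp add: mult.assoc)
  then have "(a * y * t * (b * a) * y) * b = 0"
    using zero_product_insert[of "a * y * t" "y * b" "b * a"] by (simp add: mult.assoc)
  then have "(a * y * t * (b * a) * y) * t * b = 0"
    by (rule zero_product_insert)
  then have "(a * y * t * b) * (a * y * t * b) = 0"
    by (simp add: mult.assoc)
  then show ?thesis by (rule reduced)
qed

text \<open>Every element of the monoid generated by S \<union> T can be sorted into a product s t as far
  as zero products are concerned.\<close>

lemma monoid_gen_Un_zero_product:
  assumes S: "mult_subset S" and T: "mult_subset T"
  shows "x \<in> monoid_gen (S \<union> T) \<Longrightarrow>
    \<exists>s\<in>S. \<exists>t\<in>T. \<forall>u v. u * x * v = 0 \<longrightarrow> u * s * t * (v::'a) = 0"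
proof (induction x rule: monoid_gen.induct)
  case one
  then show ?case
    using S T by (intro bexI[of _ 1]) (auto simp: mult_subset_def)
next
  case (snoc x y)
  then obtain s t where st: "s \<in> S" "t \<in> T" "\<forall>u v. u * x * v = 0 \<longrightarrow> u * s * t * v = 0"
    by blast
  then have xy: "u * s * t * (y * v) = 0" if "u * (x * y) * v = 0" for u v
    using that by (simp add: mult.assoc)
  show ?case
  proof (cases "y \<in> S")
    case True
    have "u * (s * y) * t * v = 0" if "u * (x * y) * v = 0" for u v
      using zero_product_swap[of "u * s" t y v] xy[OF that] by (simp add: mult.assoc)
    moreover have "s * y \<in> S"
      using S st(1) True by (simp add: mult_subset_def)
    ultimately show ?thesis
      using st(2) by blast
  next
    case False
    then have "y \<in> T"
      using snoc by blast
    then have "t * y \<in> T"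
      using T st(2) by (simp add: mult_subset_def)
    moreover have "u * s * (t * y) * v = 0" if "u * (x * y) * v = 0" for u v
      using xy[OF that] by (simp add: mult.assoc)
    ultimately show ?thesis
      using st(1) by blast
  qed
qed

lemma left_den_monoid_gen_Un:
  assumes S: "left_den S" and T: "left_den T" and disj: "S \<inter> ass T = {}"
  shows "left_den (monoid_gen (S \<union> (T::'a set)))"
  unfolding left_den_def left_Ore_def mult_subset_def
proof (intro conjI ballI allI impI)
  let ?M = "monoid_gen (S \<union> T)"
  show "1 \<in> ?M"
    by (rule monoid_gen.one)
  show "0 \<notin> ?M"
  proof
    assume "0 \<in> ?M"
    then obtain s t where st: "s \<in> S" "t \<in> T" "\<forall>u v. u * 0 * v = 0 \<longrightarrow> u * s * t * v = 0"
      using monoid_gen_Un_zero_product left_den_mult_subset S T by blast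
    then have "s * t = 0"
      by (metis mult_1_left mult_1_right mult_zero_left)
    then obtain t' where "t' \<in> T" "t' * s = 0"
      using left_den_annD[OF T st(2)] by blast
    then show False
      using disj st(1) by (auto simp: ass_def)
  qed
  show "a * b \<in> ?M" if "a \<in> ?M" "b \<in> ?M" for a b
    using monoid_gen_mult that by blast
  show "\<exists>s'\<in>?M. \<exists>r'. s' * r = r' * s" if "s \<in> ?M" for r s
  proof (rule monoid_gen_Ore[OF _ that])
    show "\<exists>m\<in>?M. \<exists>r'. m * r = r' * y" if "y \<in> S \<union> T" for y r
      using that left_den_OreD[OF S] left_den_OreD[OF T] monoid_gen_base
      by (metis UnCI UnE)
  qed
  show "\<exists>t\<in>?M. t * r = 0" if "s \<in> ?M" "r * s = 0" for r s
    using that zero_product_commute by blast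
qed

lemma maxDen_l_Int_ass:
  assumes S: "S \<in> maxDen_l" and T: "T \<in> maxDen_l" and "S \<noteq> (T::'a set)"
  shows "S \<inter> ass T \<noteq> {}"
proof
  assume "S \<inter> ass T = {}"
  have "left_den S" "left_den T"
    using S T by (auto simp: maxDen_l_def)
  then have "left_den (monoid_gen (S \<union> T))"
    using \<open>S \<inter> ass T = {}\<close> by (rule left_den_monoid_gen_Un)
  moreover have "S \<subseteq> monoid_gen (S \<union> T)" "T \<subseteq> monoid_gen (S \<union> T)"
    using monoid_gen_base by blast+
  ultimately have "monoid_gen (S \<union> T) = S" "monoid_gen (S \<union> T) = T"
    using S T by (simp_all add: maxDen_l_def)
  with \<open>S \<noteq> T\<close> show False
    by simp
qed

lemma core_subset_ass:
  assumes "S \<in> maxDen_l" "T \<in> maxDen_l" "S \<noteq> T" "s \<in> core (S::'a set)"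
  shows "s \<in> ass T"
proof -
  obtain t where t: "t \<in> T" "t \<in> ass S"
    using maxDen_l_Int_ass[of T S] assms(1-3) by blast
  then have "s * t = 0"
    using assms(4) by (auto simp: core_def kerl_def)
  moreover have "left_den T"
    using assms(2) by (simp add: maxDen_l_def)
  ultimately obtain t' where "t' \<in> T" "t' * s = 0"
    using left_den_annD t(1) by blast
  then show ?thesis
    by (auto simp: ass_def)
qed

end


subsection \<open>The core of a maximal left denominator set\<close>

lemma mem_core_if_mem_ass_others:
  assumes loc: "left_localizable TYPE('a::ring_1)" and S: "S \<in> maxDen_l"
    and s: "s \<in> (S::'a set)" "\<forall>T\<in>maxDen_l - {S}. s \<in> ass T"
  shows "s \<in> core S"
proof -
  have "r \<in> kerl s" if r: "r \<in> ass S" for r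
  proof (rule ccontr)
    assume "r \<notin> kerl s"
    then obtain K where K: "K \<in> maxDen_l" "s * r \<in> K"
      using left_localizable_maxDen_l_cover[OF loc] by (auto simp: kerl_def)
    have "s * r \<in> ass K"
    proof (cases "K = S")
      case True
      then show ?thesis
        using ass_mult_left S s(1) r by (auto simp: maxDen_l_def)
    next
      case False
      then show ?thesis
        using ass_mult_right s(2) K(1) by blast
    qed
    then show False
      using left_den_Int_ass K by (auto simp: maxDen_l_def)
  qed
  then show ?thesis
    using s(1) kerl_subset_ass[OF s(1)] by (auto simp: core_def)
qed

lemma core_maxDen_l:
  assumes loc: "left_localizable TYPE('a::ring_1)" and S: "(S::'a set) \<in> maxDen_l"
  shows "core S = S \<inter> (\<Inter>T\<in>maxDen_l - {S}. ass T)"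
proof
  show "core S \<subseteq> S \<inter> (\<Inter>T\<in>maxDen_l - {S}. ass T)"
    using core_subset_ass[OF left_localizable_reduced[OF loc] S] by (auto simp: core_def)
  show "S \<inter> (\<Inter>T\<in>maxDen_l - {S}. ass T) \<subseteq> core S"
    using mem_core_if_mem_ass_others[OF loc S] by blast
qed

theorem theorem4p5:
  fixes S :: "nat \<Rightarrow> 'a::ring_1 set" and n :: nat
  assumes "left_localizable TYPE('a)"
    and "maxDen_l = S ` {1..n}"
    and "inj_on S {1..n}"
  shows "(n = 1 \<longrightarrow> core (S 1) = S 1 \<and> S 1 = UNIV - {0}) \<and>
         (n \<ge> 2 \<longrightarrow> (\<forall>i\<in>{1..n}. core (S i) = S i \<inter> (\<Inter>j\<in>{1..n} - {i}. ass (S j))))"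
proof -
  have core: "core (S i) = S i \<inter> (\<Inter>j\<in>{1..n} - {i}. ass (S j))" if "i \<in> {1..n}" for i
  proof -
    have "S i \<in> maxDen_l"
      using assms(2) that by blast
    then have "core (S i) = S i \<inter> (\<Inter>T\<in>maxDen_l - {S i}. ass T)"
      by (rule core_maxDen_l[OF assms(1)])
    also have "maxDen_l - {S i} = S ` ({1..n} - {i})"
      using assms(2,3) that by (auto simp: inj_on_image_set_diff)
    finally show ?thesis
      by (simp add: image_image)
  qed
  have "S 1 = UNIV - {0}" if "n = 1"
    using that assms(2) left_localizable_maxDen_l_cover[OF assms(1)]
      left_den_zero_notin[of "S 1"] by (auto simp: maxDen_l_def)
  moreover have "core (S 1) = S 1" if "n = 1"
    using core[of 1] that by simp
  ultimately show ?thesis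
    using core by blast
qed

end
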